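(* Let $t$ and $m$ be positive integers. Then for every positive integer $n$, \[ \sum_{s=0}^{\infty}p_{mt,t}\!\left(n-\tfrac{s(3s-1)}{2}\right) + \sum_{s=1}^{\infty}p_{mt,t}\!\left(n-\tfrac{s(3s+1)}{2}\right)\equiv \begin{cases} 1 \pmod{2}, & \text{if } n=\tfrac{1}{2}(mk^{2} -(m-2)k)t \text{ for some positive integer } k,\\ 0\pmod{2}, & \text{otherwise}. \end{cases} \]
   Context: A partition $\lambda$ of a non-negative integer $n$ is a non-increasing sequence of positive integers (its parts) summing to $n$. For positive integers $A$ and $a$, $\mathrm{mex}_{A,a}(\lambda)$ denotes the smallest positive integer congruent to $a$ modulo $A$ that is not a part of $\lambda$. Then $p_{A,a}(n)$ denotes the number of partitions $\lambda$ of $n$ satisfying $\mathrm{mex}_{A,a}(\lambda)\equiv a \pmod{2A}$. By convention $p_{A,a}(n)=0$ for negative integers $n$ (so the sums are finite). *)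

theory Defs
  imports "HOL-Analysis.Analysis" "HOL-Library.Multiset"
begin

definition partitions :: "nat \<Rightarrow> nat multiset set" where
  "partitions n = {M. (\<forall>x \<in># M. 0 < x) \<and> sum_mset M = n}"

definition mex :: "nat \<Rightarrow> nat \<Rightarrow> nat multiset \<Rightarrow> nat" where
  "mex A a M = (LEAST k. 0 < k \<and> k mod A = a mod A \<and> k \<notin># M)"

definition p_mex :: "nat \<Rightarrow> nat \<Rightarrow> int \<Rightarrow> nat" where
  "p_mex A a n = (if n < 0 then 0 else
     card {M \<in> partitions (nat n). mex A a M mod (2*A) = a mod (2*A)})"

end

theory Submission
  imports Defs "HOL-Library.Z2"
begin

text \<open>
  Put \<open>A = m t\<close> and \<open>v\<^sub>i = t + i A\<close>. These are the positive integers congruent to \<open>t\<close>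
  modulo \<open>A\<close> in increasing order, so \<open>mex\<^sub>A\<^sub>,\<^sub>t(M) = v\<^sub>j\<close> for the first index \<open>j\<close> with
  \<open>v\<^sub>j\<close> not a part of \<open>M\<close>, and the condition defining \<open>p\<^sub>A\<^sub>,\<^sub>t\<close> says that \<open>j\<close> is even.
  Consider the pairs \<open>(S, M)\<close> of total size \<open>n\<close> with \<open>S\<close> a partition into distinct parts
  and \<open>M\<close> a partition with even \<open>j\<close>. Franklin's involution acting on \<open>S\<close> fixes exactly
  the pairs whose \<open>S\<close> is one of the pentagonal sets \<open>{s..2s-1}\<close>, \<open>{s+1..2s}\<close> with sums
  \<open>s(3s-1)/2\<close>, \<open>s(3s+1)/2\<close>, so it has as many fixed points as the left-hand side counts.
  A second involution moves the smallest part that can be moved without changing \<open>j\<close>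
  from \<open>S\<close> to \<open>M\<close> or back. Its fixed points have \<open>M = {v\<^sub>0, \<dots>, v\<^sub>j\<^sub>-\<^sub>1}\<close> and
  \<open>S \<subseteq> {v\<^sub>j}\<close>, so there is one if \<open>n = v\<^sub>0 + \<dots> + v\<^sub>k\<^sub>-\<^sub>1 = (m k\<^sup>2 - (m - 2) k) t / 2\<close>
  for some \<open>k\<close> and none otherwise. An involution of a finite set has as many fixed points
  as elements modulo 2, which links the two counts.
\<close>

lemma card_fixpoints_involution_mod_2:
  assumes "finite X" and "\<And>x. x \<in> X \<Longrightarrow> f x \<in> X" and "\<And>x. x \<in> X \<Longrightarrow> f (f x) = x"
  shows "card {x \<in> X. f x = x} mod 2 = card X mod 2"
proof -
  let ?F = "{x \<in> X. f x = x}"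
  \<comment> \<open>the non-fixed points cancel in pairs \<open>{x, f x}\<close> over the field with two elements\<close>
  have "(\<Sum>x \<in> X - ?F. 1 :: bit) = 0"
  proof (rule sum_involution_eq_0[where h = f])
    fix x assume x: "x \<in> X - ?F"
    then have "f (f x) = x" and "f x \<noteq> x"
      using assms(3) by auto
    then show "f x \<in> X - ?F" and "f (f x) = x" and "f x \<noteq> x"
      using x assms(2) by auto
  qed (simp add: one_add_one)
  then have "even (of_nat (card (X - ?F)) :: bit)"
    by simp
  then have "even (card (X - ?F))"
    by (simp only: even_of_nat_iff)
  moreover have "card (X - ?F) + card ?F = card X"
    using assms(1) by (simp add: card_Diff_subset card_mono)
  ultimately show ?thesis
    by presburger
qed

section \<open>Franklin's involution\<close>

definition slope :: "nat set \<Rightarrow> nat" where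
  "slope S = (LEAST k. Max S - k \<notin> S)"

lemma slope:
  assumes fin: "finite S" and ne: "S \<noteq> {}" and pos: "0 \<notin> S"
  shows Max_minus_slope_notin: "Max S - slope S \<notin> S"
    and Max_minus_in_if_less_slope: "k < slope S \<Longrightarrow> Max S - k \<in> S"
    and slope_pos: "0 < slope S"
proof -
  have ex: "\<exists>k. Max S - k \<notin> S"
    using pos by (intro exI[of _ "Max S"]) simp
  show gap: "Max S - slope S \<notin> S"
    unfolding slope_def by (rule LeastI_ex[OF ex])
  show "k < slope S \<Longrightarrow> Max S - k \<in> S"
    unfolding slope_def using not_less_Least by blast
  show "0 < slope S"
    using gap fin ne by (intro gr0I) simp
qed

lemma slope_eqI:
  assumes "\<And>k. k < s \<Longrightarrow> Max S - k \<in> S" and "Max S - s \<notin> S"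
  shows "slope S = s"
  unfolding slope_def by (rule Least_equality) (use assms in \<open>auto simp: not_le[symmetric]\<close>)

definition pentagon_minus :: "nat \<Rightarrow> nat set" where
  "pentagon_minus s = {s..<2 * s}"

definition pentagon_plus :: "nat \<Rightarrow> nat set" where
  "pentagon_plus s = {s + 1..2 * s}"

lemma card_pentagon_minus: "card (pentagon_minus s) = s"
  by (simp add: pentagon_minus_def)

lemma card_pentagon_plus: "card (pentagon_plus s) = s"
  by (simp add: pentagon_plus_def)

lemma sum_pentagon_minus: "2 * \<Sum>(pentagon_minus s) = s * (3 * s - 1)"
  unfolding pentagon_minus_def by (simp add: Sum_Ico_nat algebra_simps)

lemma sum_pentagon_plus: "2 * \<Sum>(pentagon_plus s) = s * (3 * s + 1)"
  unfolding pentagon_plus_def by (simp add: Sum_Icc_nat algebra_simps)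

lemma pentagon_minus_ne_plus:
  assumes "0 < s'"
  shows "pentagon_minus s \<noteq> pentagon_plus s'"
proof
  assume eq: "pentagon_minus s = pentagon_plus s'"
  then have "s = s'"
    by (metis card_pentagon_minus card_pentagon_plus)
  moreover have "s' \<in> pentagon_minus s'" "s' \<notin> pentagon_plus s'"
    using assms by (simp_all add: pentagon_minus_def pentagon_plus_def)
  ultimately show False
    using eq by simp
qed

lemma int_sum_pentagon_minus: "int (\<Sum>(pentagon_minus s)) = int s * (3 * int s - 1) div 2"
proof -
  have "2 * int (\<Sum>(pentagon_minus s)) = int s * (3 * int s - 1)"
    using arg_cong[OF sum_pentagon_minus[of s], of int] by (cases "s = 0") (simp_all add: of_nat_diff)
  then show ?thesis
    by simp
qed

lemma int_sum_pentagon_plus: "int (\<Sum>(pentagon_plus s)) = int s * (3 * int s + 1) div 2"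
proof -
  have "2 * int (\<Sum>(pentagon_plus s)) = int s * (3 * int s + 1)"
    using arg_cong[OF sum_pentagon_plus[of s], of int] by (simp add: algebra_simps)
  then show ?thesis
    by simp
qed

\<comment> \<open>For a smallest part \<open>b\<close> at most the slope: remove it and add 1 to each of the \<open>b\<close> largest
  parts. As these form a run, only the two ends of the run change.\<close>
definition franklin_raise :: "nat set \<Rightarrow> nat set" where
  "franklin_raise S = insert (Max S + 1) (S - {Min S, Max S - Min S + 1})"

\<comment> \<open>Otherwise: subtract 1 from each part of the top run and add its length as a new part.\<close>
definition franklin_lower :: "nat set \<Rightarrow> nat set" where
  "franklin_lower S = insert (Max S - slope S) (insert (slope S) (S - {Max S}))"

definition franklin :: "nat set \<Rightarrow> nat set" where
  "franklin S =
    (if S = {} then S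
     else if Min S \<le> slope S then
       (if Min S = Max S - Min S + 1 then S else franklin_raise S)
     else if S = pentagon_plus (slope S) then S else franklin_lower S)"

context
  fixes S :: "nat set"
  assumes fin: "finite S" and ne: "S \<noteq> {}" and pos: "0 \<notin> S"
begin

lemma top_run_if_small_base:
  assumes "Min S \<le> slope S"
  shows "{Max S - Min S + 1..Max S} \<subseteq> S"
proof
  fix y assume "y \<in> {Max S - Min S + 1..Max S}"
  then show "y \<in> S"
    using Max_minus_in_if_less_slope[OF fin ne pos, of "Max S - y"] assms by auto
qed

lemma pentagon_minus_if_exceptional:
  assumes "Min S \<le> slope S" and "Min S = Max S - Min S + 1"
  shows "S = pentagon_minus (Min S)"
proof
  have "pentagon_minus (Min S) = {Max S - Min S + 1..Max S}"
    using assms(2) Min_le[OF fin Max_in[OF fin ne]] by (auto simp: pentagon_minus_def)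
  then show "pentagon_minus (Min S) \<subseteq> S"
    using top_run_if_small_base[OF assms(1)] by simp
  show "S \<subseteq> pentagon_minus (Min S)"
  proof
    fix y assume "y \<in> S"
    then show "y \<in> pentagon_minus (Min S)"
      using assms(2) Min_le[OF fin] Max_ge[OF fin] by (fastforce simp: pentagon_minus_def)
  qed
qed

lemma franklin_raise_pivot:
  assumes "Min S \<le> slope S" and "Min S \<noteq> Max S - Min S + 1"
  shows "0 < Min S" and "Max S - Min S + 1 \<in> S" and "Min S < Max S - Min S + 1"
proof -
  show "0 < Min S"
    using fin ne pos by (metis Min_in gr0I)
  then have "Max S - Min S + 1 \<in> {Max S - Min S + 1..Max S}"
    using Min_le[OF fin Max_in[OF fin ne]] by auto
  then show c_in: "Max S - Min S + 1 \<in> S"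
    using top_run_if_small_base[OF assms(1)] by blast
  show "Min S < Max S - Min S + 1"
    using Min_le[OF fin c_in] assms(2) by simp
qed

lemma franklin_raise_parts:
  assumes small_base: "Min S \<le> slope S" and nex: "Min S \<noteq> Max S - Min S + 1"
  shows finite_franklin_raise: "finite (franklin_raise S)"
    and zero_notin_franklin_raise: "0 \<notin> franklin_raise S"
    and sum_franklin_raise: "\<Sum>(franklin_raise S) = \<Sum>S"
proof -
  define b where "b = Min S"
  define c where "c = Max S - b + 1"
  have bS: "b \<in> S"
    using fin ne by (simp add: b_def)
  moreover have "b \<le> Max S" and "Max S + 1 \<notin> S"
    using Max_ge[OF fin] bS by fastforce+
  moreover have "c \<in> S" and "b < c"
    using franklin_raise_pivot[OF small_base nex] by (simp_all add: b_def c_def)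
  moreover have "franklin_raise S = insert (Max S + 1) (S - {b, c})"
    by (simp add: franklin_raise_def b_def c_def)
  ultimately show "finite (franklin_raise S)" "0 \<notin> franklin_raise S" "\<Sum>(franklin_raise S) = \<Sum>S"
    using fin pos by (simp_all add: sum.remove[of S b] sum.remove[of "S - {b}" c]
        Diff_insert2[symmetric] insert_commute c_def)
qed

lemma franklin_raise_shape:
  assumes small_base: "Min S \<le> slope S" and nex: "Min S \<noteq> Max S - Min S + 1"
  shows Max_franklin_raise: "Max (franklin_raise S) = Max S + 1"
    and slope_franklin_raise: "slope (franklin_raise S) = Min S"
    and Min_franklin_raise: "Min S < Min (franklin_raise S)"
proof -
  define b where "b = Min S"
  define M where "M = Max S"
  define c where "c = M - b + 1"
  define R where "R = franklin_raise S"
  have bS: "b \<in> S" and bound: "\<And>y. y \<in> S \<Longrightarrow> b \<le> y \<and> y \<le> M"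
    using fin ne by (auto simp: b_def M_def)
  have b_pos: "0 < b" and b_less_c: "b < c"
    using franklin_raise_pivot[OF small_base nex] by (simp_all add: b_def c_def M_def)
  have R: "R = insert (M + 1) (S - {b, c})"
    by (simp add: R_def franklin_raise_def b_def c_def M_def)
  have Max_R: "Max R = M + 1"
    using fin bound by (intro Max_eqI) (auto simp: R le_SucI)
  then show "Max (franklin_raise S) = Max S + 1"
    by (simp add: R_def M_def)
  have "slope R = b"
  proof (rule slope_eqI)
    fix k assume "k < b"
    then show "Max R - k \<in> R"
      unfolding Max_R using Max_minus_in_if_less_slope[OF fin ne pos, of "k - 1"] small_base b_less_c
      by (cases k) (auto simp: R b_def c_def M_def)
  next
    show "Max R - b \<notin> R"
      unfolding Max_R using b_pos bound[OF bS] by (auto simp: R c_def)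
  qed
  then show "slope (franklin_raise S) = Min S"
    by (simp add: R_def b_def)
  have "b < Min R"
    using fin bound[OF bS] bound b_less_c by (subst Min_gr_iff) (auto simp: R order_le_less)
  then show "Min S < Min (franklin_raise S)"
    by (simp add: R_def b_def)
qed

lemma franklin_franklin_raise:
  assumes small_base: "Min S \<le> slope S" and nex: "Min S \<noteq> Max S - Min S + 1"
  shows "franklin (franklin_raise S) = S"
proof -
  define b where "b = Min S"
  define M where "M = Max S"
  define R where "R = franklin_raise S"
  note shape = franklin_raise_shape[OF small_base nex, folded R_def b_def M_def]
  have "b \<in> S"
    using fin ne by (simp add: b_def)
  have pivot: "0 < b" "M - b + 1 \<in> S" "b < M - b + 1"
    using franklin_raise_pivot[OF small_base nex] by (simp_all add: b_def M_def)
  have "R \<noteq> pentagon_plus b"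
  proof
    assume "R = pentagon_plus b"
    then have "Max R = 2 * b"
      using pivot by (auto simp: pentagon_plus_def intro!: Max_eqI)
    then show False
      using pivot shape(1) by simp
  qed
  moreover have "franklin_lower R = S"
  proof -
    have "M + 1 \<notin> S"
      using Max_ge[OF fin] by (fastforce simp: M_def)
    then have "R - {M + 1} = S - {b, M - b + 1}"
      by (auto simp: R_def franklin_raise_def b_def M_def)
    moreover have "M + 1 - b = M - b + 1"
      using pivot by simp
    ultimately show ?thesis
      unfolding franklin_lower_def shape(1,2) using pivot \<open>b \<in> S\<close> by auto
  qed
  moreover have "R \<noteq> {}"
    by (simp add: R_def franklin_raise_def)
  ultimately show ?thesis
    unfolding R_def[symmetric] franklin_def using shape(2,3) by auto
qed

lemma slope_less_Max_minus_slope: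
  assumes large_base: "slope S < Min S" and nex: "S \<noteq> pentagon_plus (slope S)"
  shows "slope S < Max S - slope S"
proof -
  define s where "s = slope S"
  define M where "M = Max S"
  have bound: "\<And>y. y \<in> S \<Longrightarrow> s < y \<and> y \<le> M"
    using fin ne large_base unfolding s_def M_def by (auto intro: less_le_trans)
  have nex': "S \<noteq> {s + 1..2 * s}"
    using nex by (simp add: pentagon_plus_def s_def)
  have top_run: "{M - s + 1..M} \<subseteq> S"
  proof
    fix y assume "y \<in> {M - s + 1..M}"
    then show "y \<in> S"
      using Max_minus_in_if_less_slope[OF fin ne pos, of "M - y"] by (auto simp: s_def M_def)
  qed
  have "s < M - s"
  proof (cases "S = {M - s + 1..M}")
    case True
    have "s \<le> M"
      using bound[OF Max_in[OF fin ne]] by (simp add: M_def)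
    then have "Min S = M - s + 1"
      unfolding True using slope_pos[OF fin ne pos] by (auto simp: s_def[symmetric] intro!: Min_eqI)
    moreover have "M - s \<noteq> s"
      using True nex' by (auto simp: mult_2)
    ultimately show ?thesis
      using large_base by (simp add: s_def)
  next
    case False
    then obtain y where "y \<in> S" "y \<notin> {M - s + 1..M}"
      using top_run by blast
    then show ?thesis
      using bound[of y] Max_minus_slope_notin[OF fin ne pos] by (cases "y = M - s") (auto simp: s_def M_def)
  qed
  then show ?thesis
    by (simp add: s_def M_def)
qed

lemma franklin_lower_parts:
  assumes large_base: "slope S < Min S" and nex: "S \<noteq> pentagon_plus (slope S)"
  shows finite_franklin_lower: "finite (franklin_lower S)"
    and zero_notin_franklin_lower: "0 \<notin> franklin_lower S"
    and sum_franklin_lower: "\<Sum>(franklin_lower S) = \<Sum>S"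
proof -
  define s where "s = slope S"
  define M where "M = Max S"
  have "M \<in> S" "M - s \<notin> S" "s \<notin> S" "0 < s" "s < M - s"
    using Max_in[OF fin ne] Max_minus_slope_notin[OF fin ne pos] large_base Min_le[OF fin]
      slope_pos[OF fin ne pos] slope_less_Max_minus_slope[OF large_base nex]
    by (fastforce simp: s_def M_def)+
  moreover have "franklin_lower S = insert (M - s) (insert s (S - {M}))"
    by (simp add: franklin_lower_def s_def M_def)
  ultimately show "finite (franklin_lower S)" "0 \<notin> franklin_lower S" "\<Sum>(franklin_lower S) = \<Sum>S"
    using fin pos by (simp_all add: sum.remove[of S M])
qed

lemma franklin_lower_shape:
  assumes large_base: "slope S < Min S" and nex: "S \<noteq> pentagon_plus (slope S)"
  shows Max_franklin_lower: "Max (franklin_lower S) = Max S - 1"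
    and Min_franklin_lower: "Min (franklin_lower S) = slope S"
    and slope_le_slope_franklin_lower: "slope S \<le> slope (franklin_lower S)"
proof -
  define s where "s = slope S"
  define M where "M = Max S"
  define L where "L = franklin_lower S"
  have bound: "\<And>y. y \<in> S \<Longrightarrow> s < y \<and> y \<le> M"
    using fin ne large_base unfolding s_def M_def by (auto intro: less_le_trans)
  have run: "k < s \<Longrightarrow> M - k \<in> S" for k
    using Max_minus_in_if_less_slope[OF fin ne pos] by (simp add: s_def M_def)
  have s_pos: "0 < s" and s_less: "s < M - s"
    using slope_pos[OF fin ne pos] slope_less_Max_minus_slope[OF large_base nex]
    by (simp_all add: s_def M_def)
  have L: "L = insert (M - s) (insert s (S - {M}))"
    by (simp add: L_def franklin_lower_def s_def M_def)
  have "M - 1 \<in> L"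
    using run[of 1] s_pos s_less by (cases "s = 1") (auto simp: L)
  then have Max_L: "Max L = M - 1"
    using fin s_pos s_less by (intro Max_eqI) (auto simp: L dest: bound)
  then show "Max (franklin_lower S) = Max S - 1"
    by (simp add: L_def M_def)
  have "Min L = s"
    using fin s_less by (intro Min_eqI) (auto simp: L dest: bound)
  then show "Min (franklin_lower S) = slope S"
    by (simp add: L_def s_def)
  have "finite L" and "0 \<notin> L"
    using franklin_lower_parts[OF large_base nex] by (simp_all add: L_def)
  moreover have "L \<noteq> {}"
    by (simp add: L)
  moreover have "Max L - k \<in> L" if "k < s" for k
    unfolding Max_L using run[of "k + 1"] that s_less by (cases "k + 1 = s") (auto simp: L)
  ultimately have "s \<le> slope L"
    using Max_minus_slope_notin[of L] by (meson not_le)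
  then show "slope S \<le> slope (franklin_lower S)"
    by (simp add: L_def s_def)
qed

lemma franklin_franklin_lower:
  assumes large_base: "slope S < Min S" and nex: "S \<noteq> pentagon_plus (slope S)"
  shows "franklin (franklin_lower S) = S"
proof -
  define s where "s = slope S"
  define M where "M = Max S"
  define L where "L = franklin_lower S"
  note shape = franklin_lower_shape[OF large_base nex, folded L_def s_def M_def]
  have s_less: "s < M - s" and "M \<in> S" "M - s \<notin> S" "s \<notin> S"
    using slope_less_Max_minus_slope[OF large_base nex] Max_in[OF fin ne] Max_minus_slope_notin[OF fin ne pos]
      large_base Min_le[OF fin] by (fastforce simp: s_def M_def)+
  have "franklin_raise L = S"
  proof -
    have "M - 1 + 1 = M" and "M - 1 - s + 1 = M - s"
      using s_less by auto
    then show ?thesis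
      unfolding franklin_raise_def shape(1,2) using \<open>M \<in> S\<close> \<open>M - s \<notin> S\<close> \<open>s \<notin> S\<close> s_less
      by (auto simp: L_def franklin_lower_def s_def M_def)
  qed
  moreover have "s \<noteq> M - 1 - s + 1" and "L \<noteq> {}"
    using s_less by (simp_all add: L_def franklin_lower_def)
  ultimately show ?thesis
    unfolding L_def[symmetric] franklin_def shape(1,2) using shape(3) by auto
qed

end

lemma franklin_involution:
  assumes "finite S" and "0 \<notin> S"
  shows "finite (franklin S)" and "0 \<notin> franklin S" and "\<Sum>(franklin S) = \<Sum>S"
    and "franklin (franklin S) = S"
proof -
  consider "franklin S = S"
    | "S \<noteq> {}" "Min S \<le> slope S" "Min S \<noteq> Max S - Min S + 1" "franklin S = franklin_raise S"
    | "S \<noteq> {}" "slope S < Min S" "S \<noteq> pentagon_plus (slope S)" "franklin S = franklin_lower S"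
    unfolding franklin_def
    by (cases "S = {}"; cases "Min S \<le> slope S"; cases "Min S = Max S - Min S + 1";
        cases "S = pentagon_plus (slope S)") (auto simp: not_le)
  then have "finite (franklin S) \<and> 0 \<notin> franklin S \<and> \<Sum>(franklin S) = \<Sum>S \<and> franklin (franklin S) = S"
    by cases (use assms franklin_raise_parts[of S] franklin_franklin_raise[of S]
        franklin_lower_parts[of S] franklin_franklin_lower[of S] in simp_all)
  then show "finite (franklin S)" "0 \<notin> franklin S" "\<Sum>(franklin S) = \<Sum>S" "franklin (franklin S) = S"
    by auto
qed

lemma franklin_pentagon:
  shows franklin_pentagon_minus: "franklin (pentagon_minus s) = pentagon_minus s"
    and franklin_pentagon_plus: "franklin (pentagon_plus s) = pentagon_plus s"
proof -
  show "franklin (pentagon_minus s) = pentagon_minus s"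
  proof (cases "s = 0")
    case False
    let ?P = "pentagon_minus s"
    have "Max ?P = 2 * s - 1" "Min ?P = s"
      using False by (auto simp: pentagon_minus_def intro!: Max_eqI Min_eqI)
    moreover from this have "slope ?P = s"
      by (intro slope_eqI) (auto simp: pentagon_minus_def)
    ultimately show ?thesis
      using False by (auto simp: franklin_def)
  qed (simp add: pentagon_minus_def franklin_def)
  show "franklin (pentagon_plus s) = pentagon_plus s"
  proof (cases "s = 0")
    case False
    let ?P = "pentagon_plus s"
    have "Max ?P = 2 * s" "Min ?P = s + 1"
      using False by (auto simp: pentagon_plus_def intro!: Max_eqI Min_eqI)
    moreover from this have "slope ?P = s"
      by (intro slope_eqI) (auto simp: pentagon_plus_def)
    ultimately show ?thesis
      using False by (auto simp: franklin_def)
  qed (simp add: pentagon_plus_def franklin_def)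
qed

lemma franklin_fixed_imp_pentagon:
  assumes fin: "finite S" and pos: "0 \<notin> S" and fixed: "franklin S = S"
  shows "\<exists>s. S = pentagon_minus s \<or> S = pentagon_plus s"
proof (cases "S = {}")
  case True
  then show ?thesis
    by (auto simp: pentagon_minus_def)
next
  case ne: False
  show ?thesis
  proof (cases "Min S \<le> slope S")
    case small_base: True
    have "Min S = Max S - Min S + 1"
    proof (rule ccontr)
      assume nex: "Min S \<noteq> Max S - Min S + 1"
      then have "franklin_raise S = S"
        using fixed ne small_base by (simp add: franklin_def)
      then show False
        using Max_franklin_raise[OF fin ne pos small_base nex] by simp
    qed
    then show ?thesis
      using pentagon_minus_if_exceptional[OF fin ne pos small_base] by blast
  next
    case large_base: False
    show ?thesis
    proof (rule ccontr)
      assume nex: "\<nexists>s. S = pentagon_minus s \<or> S = pentagon_plus s"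
      then have "franklin_lower S = S"
        using fixed ne large_base by (simp add: franklin_def)
      then show False
        using Min_franklin_lower[OF fin ne pos _ ] large_base nex by auto
    qed
  qed
qed

section \<open>Moving parts between a distinct partition and a partition\<close>

definition first_gap :: "(nat \<Rightarrow> 'a) \<Rightarrow> 'a multiset \<Rightarrow> nat" where
  "first_gap v M = (LEAST i. v i \<notin># M)"

lemma first_gap:
  assumes "inj v"
  shows first_gap_notin: "v (first_gap v M) \<notin># M"
    and in_if_less_first_gap: "i < first_gap v M \<Longrightarrow> v i \<in># M"
proof -
  have "finite (v -` set_mset M)"
    using assms by (simp add: finite_vimageI)
  then obtain j where "v j \<notin># M"
    using ex_new_if_finite[OF infinite_UNIV_nat] by blast
  then show "v (first_gap v M) \<notin># M"
    unfolding first_gap_def by (rule LeastI)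
  show "i < first_gap v M \<Longrightarrow> v i \<in># M"
    unfolding first_gap_def using not_less_Least by blast
qed

lemma first_gap_eqI:
  assumes "v j \<notin># M" and "\<And>i. i < j \<Longrightarrow> v i \<in># M"
  shows "first_gap v M = j"
  unfolding first_gap_def by (rule Least_equality) (use assms in \<open>auto simp: not_le[symmetric]\<close>)

fun move_part :: "'a \<Rightarrow> 'a set \<times> 'a multiset \<Rightarrow> 'a set \<times> 'a multiset" where
  "move_part x (S, M) = (if x \<in> S then (S - {x}, add_mset x M) else (insert x S, M - {#x#}))"

lemma move_part_move_part:
  assumes "x \<in> S \<or> x \<in># M"
  shows "move_part x (move_part x (S, M)) = (S, M)"
  using assms by (auto simp: insert_absorb)

lemma size_le_sum_mset: "\<forall>x\<in>#M. 0 < x \<Longrightarrow> size M \<le> sum_mset (M :: nat multiset)"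
  by (induction M) (auto simp: Suc_le_eq)

locale positive_injective_seq =
  fixes v :: "nat \<Rightarrow> nat"
  assumes inj_v: "inj v" and v_pos: "0 < v i"
begin

\<comment> \<open>the copies of \<open>x\<close> that can be removed from \<open>M\<close> without changing \<open>first_gap v M\<close>\<close>
definition surplus :: "nat multiset \<Rightarrow> nat \<Rightarrow> nat" where
  "surplus M x = count M x - (if x \<in> v ` {..<first_gap v M} then 1 else 0)"

definition movable :: "nat set \<times> nat multiset \<Rightarrow> nat set" where
  "movable = (\<lambda>(S, M). {x. x \<noteq> v (first_gap v M) \<and> (x \<in> S \<or> 0 < surplus M x)})"

lemma movable_iff: "x \<in> movable (S, M) \<longleftrightarrow> x \<noteq> v (first_gap v M) \<and> (x \<in> S \<or> 0 < surplus M x)"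
  by (simp add: movable_def)

definition toggle :: "nat set \<times> nat multiset \<Rightarrow> nat set \<times> nat multiset" where
  "toggle p = (if movable p = {} then p else move_part (Min (movable p)) p)"

definition pairs :: "nat \<Rightarrow> (nat set \<times> nat multiset) set" where
  "pairs n = {(S, M). finite S \<and> 0 \<notin> S \<and> (\<forall>x\<in>#M. 0 < x) \<and> even (first_gap v M)
                      \<and> \<Sum>S + sum_mset M = n}"

lemma in_if_surplus: "0 < surplus M x \<Longrightarrow> x \<in># M"
  unfolding surplus_def by (metis count_greater_zero_iff gr_zeroI zero_diff)

lemma finite_movable: "finite S \<Longrightarrow> finite (movable (S, M))"
  by (rule finite_subset[of _ "S \<union> set_mset M"]) (auto simp: movable_iff dest: in_if_surplus)

lemma first_gap_add_mset:
  assumes "x \<noteq> v (first_gap v M)"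
  shows "first_gap v (add_mset x M) = first_gap v M"
  by (rule first_gap_eqI) (use assms first_gap[OF inj_v, where M = M] in auto)

lemma first_gap_remove1:
  assumes "0 < surplus M x"
  shows "first_gap v (M - {#x#}) = first_gap v M"
proof (rule first_gap_eqI)
  show "v (first_gap v M) \<notin># M - {#x#}"
    using first_gap_notin[OF inj_v] by (meson in_diffD)
  fix i assume "i < first_gap v M"
  then show "v i \<in># M - {#x#}"
    using assms in_if_less_first_gap[OF inj_v, where i = i and M = M]
    by (cases "v i = x") (auto simp: surplus_def in_diff_count)
qed

lemma move_part_movable:
  assumes x: "x \<in> movable (S, M)" and move: "move_part x (S, M) = (S', M')"
  shows "first_gap v M' = first_gap v M" and "movable (S', M') = movable (S, M)"
proof -
  show gap: "first_gap v M' = first_gap v M"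
    using x move first_gap_add_mset first_gap_remove1 by (auto simp: movable_iff split: if_splits)
  have surplus: "surplus M' y = surplus M y" if "y \<noteq> x" for y
    using move that unfolding surplus_def gap by (auto split: if_splits)
  have x': "x \<in> S' \<or> 0 < surplus M' x"
    using x[unfolded movable_iff] move in_if_less_first_gap[OF inj_v, where M = M]
    by (auto simp: surplus_def gap split: if_splits)
  have S': "y \<in> S' \<longleftrightarrow> y \<in> S" if "y \<noteq> x" for y
    using move that by (auto split: if_splits)
  show "movable (S', M') = movable (S, M)"
  proof (intro set_eqI)
    fix y
    show "y \<in> movable (S', M') \<longleftrightarrow> y \<in> movable (S, M)"
      using x x' S'[of y] surplus[of y] unfolding movable_iff gap by (cases "y = x") auto
  qed
qed

lemma toggle_toggle:
  assumes "finite S"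
  shows "toggle (toggle (S, M)) = (S, M)"
proof (cases "movable (S, M) = {}")
  case True
  then show ?thesis
    by (simp add: toggle_def)
next
  case False
  define x where "x = Min (movable (S, M))"
  obtain S' M' where move: "move_part x (S, M) = (S', M')"
    by fastforce
  have x: "x \<in> movable (S, M)"
    unfolding x_def by (rule Min_in[OF finite_movable[OF assms] False])
  then have "movable (S', M') = movable (S, M)"
    using move_part_movable(2)[OF _ move] by simp
  moreover have "toggle (S, M) = (S', M')"
    using False move by (simp add: toggle_def x_def[symmetric] del: move_part.simps)
  ultimately have "toggle (toggle (S, M)) = move_part x (S', M')"
    using False by (simp add: toggle_def x_def[symmetric])
  also have "\<dots> = (S, M)"
    using move_part_move_part[of x S M] x move by (auto simp: movable_iff dest: in_if_surplus)
  finally show ?thesis .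
qed

lemma move_part_pairs:
  assumes x: "x \<in> movable (S, M)" and p: "(S, M) \<in> pairs n"
  shows "move_part x (S, M) \<in> pairs n"
proof -
  obtain S' M' where move: "move_part x (S, M) = (S', M')"
    by fastforce
  have fin: "finite S" and S_pos: "0 \<notin> S" and M_pos: "\<forall>y\<in>#M. 0 < y"
    and even: "even (first_gap v M)" and sum: "\<Sum>S + sum_mset M = n"
    using p by (auto simp: pairs_def)
  have "\<Sum>S' + sum_mset M' = n"
  proof (cases "x \<in> S")
    case True
    then have "S' = S - {x}" "M' = add_mset x M"
      using move by simp_all
    then show ?thesis
      using True fin sum by (simp add: sum.remove)
  next
    case False
    then have "x \<in># M"
      using x by (auto simp: movable_iff dest: in_if_surplus)
    moreover have "S' = insert x S" "M' = M - {#x#}"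
      using move False by simp_all
    ultimately show ?thesis
      using False fin sum sum_mset.remove[of x M] by simp
  qed
  moreover have "finite S'" "0 \<notin> S'" "\<forall>y\<in>#M'. 0 < y"
    using move fin S_pos M_pos x by (auto simp: movable_iff split: if_splits dest: in_diffD in_if_surplus)
  ultimately show ?thesis
    using move even move_part_movable(1)[OF x move] by (simp add: pairs_def)
qed

lemma toggle_pairs:
  assumes "(S, M) \<in> pairs n"
  shows "toggle (S, M) \<in> pairs n"
proof -
  have "finite S"
    using assms by (simp add: pairs_def)
  then show ?thesis
    using assms move_part_pairs Min_in[OF finite_movable] by (simp add: toggle_def)
qed

lemma toggle_fixed_iff:
  assumes "finite S"
  shows "toggle (S, M) = (S, M) \<longleftrightarrow> movable (S, M) = {}"
proof
  assume fixed: "toggle (S, M) = (S, M)"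
  show "movable (S, M) = {}"
  proof (rule ccontr)
    assume "movable (S, M) \<noteq> {}"
    then have "move_part (Min (movable (S, M))) (S, M) = (S, M)"
      using fixed by (simp add: toggle_def del: move_part.simps)
    then show False
      by (auto split: if_splits)
  qed
qed (simp add: toggle_def)

definition staircase :: "nat \<Rightarrow> nat multiset" where
  "staircase k = mset_set (v ` {..<k})"

lemma count_staircase: "count (staircase k) x = (if x \<in> v ` {..<k} then 1 else 0)"
  by (simp add: staircase_def count_mset_set')

lemma first_gap_staircase: "first_gap v (staircase k) = k"
  by (rule first_gap_eqI) (auto simp: staircase_def inj_eq[OF inj_v])

lemma sum_mset_staircase: "sum_mset (staircase k) = (\<Sum>i<k. v i)"
  using sum_unfold_sum_mset[of id "v ` {..<k}"]
  by (simp add: staircase_def sum.reindex[OF inj_on_subset[OF inj_v]])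

lemma movable_empty_iff:
  "movable (S, M) = {} \<longleftrightarrow> S \<subseteq> {v (first_gap v M)} \<and> M = staircase (first_gap v M)"
    (is "_ \<longleftrightarrow> S \<subseteq> {v ?g} \<and> _")
proof
  assume "movable (S, M) = {}"
  then have none: "x \<notin> S \<and> surplus M x = 0" if "x \<noteq> v ?g" for x
    using that by (auto simp: movable_iff)
  then have "S \<subseteq> {v ?g}"
    by blast
  moreover have "count M x = count (staircase ?g) x" for x
  proof (cases "x = v ?g")
    case True
    then show ?thesis
      using first_gap_notin[OF inj_v, of M] by (auto simp: count_staircase inj_eq[OF inj_v] not_in_iff)
  next
    case False
    show ?thesis
    proof (cases "x \<in> v ` {..<?g}")
      case True
      then have "0 < count M x"
        using in_if_less_first_gap[OF inj_v, where M = M] by auto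
      have "count M x - 1 = 0"
        using none[OF False] True by (simp add: surplus_def)
      then have "count M x = 1"
        using \<open>0 < count M x\<close> by linarith
      then show ?thesis
        using True by (simp add: count_staircase)
    next
      case False
      then show ?thesis
        using none[OF \<open>x \<noteq> v ?g\<close>] by (simp add: count_staircase surplus_def)
    qed
  qed
  ultimately show "S \<subseteq> {v ?g} \<and> M = staircase ?g"
    by (simp add: multiset_eqI)
next
  assume stair: "S \<subseteq> {v ?g} \<and> M = staircase ?g"
  then have "count M x = (if x \<in> v ` {..<?g} then 1 else 0)" for x
    by (metis count_staircase)
  then show "movable (S, M) = {}"
    using stair by (auto simp: movable_iff surplus_def)
qed

definition stair_pair :: "nat \<Rightarrow> nat set \<times> nat multiset" where
  "stair_pair k = (if even k then ({}, staircase k) else ({v (k - 1)}, staircase (k - 1)))"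

lemma stair_pair_in_pairs: "stair_pair k \<in> pairs (\<Sum>i<k. v i)"
proof -
  have parts_pos: "\<forall>x\<in>#staircase j. 0 < x" for j
    using v_pos by (auto simp: staircase_def)
  show ?thesis
  proof (cases "even k")
    case True
    then show ?thesis
      using parts_pos by (simp add: stair_pair_def pairs_def first_gap_staircase sum_mset_staircase)
  next
    case False
    then obtain j where "k = Suc j" "even j"
      by (cases k) auto
    then show ?thesis
      using parts_pos v_pos[of j] by (simp add: stair_pair_def pairs_def first_gap_staircase sum_mset_staircase)
  qed
qed

lemma toggle_stair_pair: "toggle (stair_pair k) = stair_pair k"
  by (simp add: stair_pair_def toggle_fixed_iff movable_empty_iff first_gap_staircase)

lemma toggle_fixed_points: "{p \<in> pairs n. toggle p = p} = stair_pair ` {k. (\<Sum>i<k. v i) = n}"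
proof (intro equalityI subsetI)
  fix p assume "p \<in> {p \<in> pairs n. toggle p = p}"
  then obtain S M where p: "p = (S, M)" and in_pairs: "(S, M) \<in> pairs n" and fixed: "toggle (S, M) = (S, M)"
    by (cases p) auto
  define g where "g = first_gap v M"
  have "finite S" "even g" and sum: "\<Sum>S + sum_mset M = n"
    using in_pairs by (simp_all add: pairs_def g_def)
  then have "S \<subseteq> {v g}" and M: "M = staircase g"
    using fixed by (simp_all add: toggle_fixed_iff movable_empty_iff g_def)
  then consider "S = {}" | "S = {v g}"
    by blast
  then show "p \<in> stair_pair ` {k. (\<Sum>i<k. v i) = n}"
  proof cases
    case 1
    then have "p = stair_pair g" "(\<Sum>i<g. v i) = n"
      using p M sum \<open>even g\<close> by (simp_all add: stair_pair_def sum_mset_staircase)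
    then show ?thesis
      by blast
  next
    case 2
    then have "p = stair_pair (Suc g)" "(\<Sum>i<Suc g. v i) = n"
      using p M sum \<open>even g\<close> by (simp_all add: stair_pair_def sum_mset_staircase)
    then show ?thesis
      by blast
  qed
next
  fix p assume "p \<in> stair_pair ` {k. (\<Sum>i<k. v i) = n}"
  then show "p \<in> {p \<in> pairs n. toggle p = p}"
    using stair_pair_in_pairs toggle_stair_pair by auto
qed

lemma card_toggle_fixed_points:
  "card {p \<in> pairs n. toggle p = p} = (if \<exists>k. (\<Sum>i<k. v i) = n then 1 else 0)"
proof -
  have "strict_mono (\<lambda>k. \<Sum>i<k. v i)"
    using v_pos by (simp add: strict_mono_Suc_iff)
  then have "{k. (\<Sum>i<k. v i) = n} = {} \<or> (\<exists>k. {k. (\<Sum>i<k. v i) = n} = {k})"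
    by (auto dest: strict_mono_eq)
  then show ?thesis
    unfolding toggle_fixed_points by auto
qed

lemma finite_pairs: "finite (pairs n)"
proof (rule finite_subset)
  show "pairs n \<subseteq> Pow {..n} \<times> (\<Union>k\<le>n. multisets_of_size {..n} k)"
  proof
    fix p assume "p \<in> pairs n"
    then obtain S M where p: "p = (S, M)" and "finite S" and M_pos: "\<forall>x\<in>#M. 0 < x"
      and sum: "\<Sum>S + sum_mset M = n"
      by (auto simp: pairs_def)
    have "x \<le> n" if "x \<in> S" for x
      using that \<open>finite S\<close> sum member_le_sum[of x S "\<lambda>x. x"] by simp
    moreover have "x \<le> n" if "x \<in># M" for x
      using that sum sum_mset.remove[of x M] by simp
    moreover have "size M \<le> n"
      using size_le_sum_mset[OF M_pos] sum by simp
    ultimately show "p \<in> Pow {..n} \<times> (\<Union>k\<le>n. multisets_of_size {..n} k)"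
      by (auto simp: p multisets_of_size_def)
  qed
qed auto

lemma card_pairs_mod_2: "card (pairs n) mod 2 = (if \<exists>k. (\<Sum>i<k. v i) = n then 1 else 0)"
proof -
  have "card (pairs n) mod 2 = card {p \<in> pairs n. toggle p = p} mod 2"
  proof (rule card_fixpoints_involution_mod_2[symmetric, OF finite_pairs])
    fix p assume p: "p \<in> pairs n"
    obtain S M where SM: "p = (S, M)"
      by fastforce
    then have "finite S"
      using p by (simp add: pairs_def)
    then show "toggle p \<in> pairs n" "toggle (toggle p) = p"
      using p toggle_pairs toggle_toggle by (simp_all add: SM)
  qed
  then show ?thesis
    by (simp add: card_toggle_fixed_points)
qed

lemma franklin_pairs:
  assumes "(S, M) \<in> pairs n"
  shows "(franklin S, M) \<in> pairs n" and "franklin (franklin S) = S"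
  using assms franklin_involution[of S] by (auto simp: pairs_def)

lemma franklin_fixed_points:
  "{p \<in> pairs n. apfst franklin p = p}
    = Sigma (pentagon_minus ` {0..n} \<union> pentagon_plus ` {1..n}) (\<lambda>S. {M. (S, M) \<in> pairs n})"
proof (intro equalityI subsetI)
  fix p assume "p \<in> {p \<in> pairs n. apfst franklin p = p}"
  then obtain S M where p: "p = (S, M)" and in_pairs: "(S, M) \<in> pairs n" and fixed: "franklin S = S"
    by (cases p) auto
  have fin: "finite S" "0 \<notin> S" and le_n: "\<Sum>S \<le> n"
    using in_pairs by (auto simp: pairs_def)
  have "S \<in> pentagon_minus ` {0..n} \<union> pentagon_plus ` {1..n}"
  proof -
    obtain s where "S = pentagon_minus s \<or> S = pentagon_plus s"
      using franklin_fixed_imp_pentagon[OF fin fixed] by blast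
    then consider "S = pentagon_minus s" | "S = pentagon_plus s" "0 < s" | "S = pentagon_minus 0"
      by (cases "s = 0") (auto simp: pentagon_minus_def pentagon_plus_def)
    then show ?thesis
    proof cases
      case 1
      then have "s \<le> \<Sum>S"
        using member_le_sum[of s S "\<lambda>x. x"] by (cases "s = 0") (auto simp: pentagon_minus_def)
      then show ?thesis
        using 1 le_n by auto
    next
      case 2
      then have "s + 1 \<le> \<Sum>S"
        using member_le_sum[of "s + 1" S "\<lambda>x. x"] by (auto simp: pentagon_plus_def)
      then show ?thesis
        using 2 le_n by auto
    qed auto
  qed
  then show "p \<in> Sigma (pentagon_minus ` {0..n} \<union> pentagon_plus ` {1..n}) (\<lambda>S. {M. (S, M) \<in> pairs n})"
    using p in_pairs by blast
next
  fix p assume "p \<in> Sigma (pentagon_minus ` {0..n} \<union> pentagon_plus ` {1..n}) (\<lambda>S. {M. (S, M) \<in> pairs n})"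
  then show "p \<in> {p \<in> pairs n. apfst franklin p = p}"
    using franklin_pentagon by auto
qed

lemma card_franklin_fixed_points:
  "card {p \<in> pairs n. apfst franklin p = p}
    = (\<Sum>s=0..n. card {M. (pentagon_minus s, M) \<in> pairs n})
      + (\<Sum>s=1..n. card {M. (pentagon_plus s, M) \<in> pairs n})"
proof -
  have "{M. (S, M) \<in> pairs n} \<subseteq> snd ` pairs n" for S
    by (auto intro: rev_image_eqI)
  then have fibers: "finite {M. (S, M) \<in> pairs n}" for S
    by (meson finite_pairs finite_imageI finite_subset)
  have "inj pentagon_minus" "inj pentagon_plus"
    by (metis injI card_pentagon_minus, metis injI card_pentagon_plus)
  moreover have "pentagon_minus ` {0..n} \<inter> pentagon_plus ` {1..n} = {}"
    using pentagon_minus_ne_plus by auto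
  ultimately show ?thesis
    unfolding franklin_fixed_points
    by (simp add: card_SigmaI fibers sum.union_disjoint sum.reindex inj_on_subset)
qed

lemma pentagon_fibers_mod_2:
  "((\<Sum>s=0..n. card {M. (pentagon_minus s, M) \<in> pairs n})
     + (\<Sum>s=1..n. card {M. (pentagon_plus s, M) \<in> pairs n})) mod 2
    = (if \<exists>k. (\<Sum>i<k. v i) = n then 1 else 0)"
proof -
  have "card {p \<in> pairs n. apfst franklin p = p} mod 2 = card (pairs n) mod 2"
  proof (rule card_fixpoints_involution_mod_2[OF finite_pairs])
    fix p assume "p \<in> pairs n"
    then show "apfst franklin p \<in> pairs n" "apfst franklin (apfst franklin p) = p"
      using franklin_pairs by (cases p, simp)+
  qed
  then show ?thesis
    by (simp only: card_franklin_fixed_points card_pairs_mod_2)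
qed

end

section \<open>The parity of the mex\<close>

lemma p_mex_of_nat: "p_mex A a (int k) = card {M \<in> partitions k. mex A a M mod (2 * A) = a mod (2 * A)}"
  by (simp add: p_mex_def)

\<comment> \<open>Without \<open>t \<le> A\<close>, the residue class of \<open>t\<close> would contain the smaller positive integer \<open>t - A\<close>.\<close>
locale positive_residue_class =
  fixes A t :: nat
  assumes t_pos: "0 < t" and t_le: "t \<le> A"
begin

sublocale positive_injective_seq "\<lambda>i. t + i * A"
  using t_pos t_le by unfold_locales (auto simp: inj_def)

lemma residue_class_eq_progression:
  "0 < k \<and> k mod A = t mod A \<longleftrightarrow> (\<exists>i. k = t + i * A)"
proof
  assume k: "0 < k \<and> k mod A = t mod A"
  have "t \<le> k"
  proof (rule ccontr)
    assume "\<not> t \<le> k"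
    then have "k mod A = k"
      using t_le by simp
    then show False
      using k t_pos t_le \<open>\<not> t \<le> k\<close> by (cases "t = A") auto
  qed
  then obtain i where "k - t = A * i"
    using k mod_eq_dvd_iff_nat by (metis dvdE)
  then show "\<exists>i. k = t + i * A"
    using \<open>t \<le> k\<close> by (metis add_diff_inverse_nat mult.commute not_le)
qed (use t_pos t_le in auto)

lemma mex_eq_first_gap: "mex A t M = t + first_gap (\<lambda>i. t + i * A) M * A"
proof -
  let ?g = "first_gap (\<lambda>i. t + i * A) M"
  have "mex A t M = (LEAST k. (\<exists>i. k = t + i * A) \<and> k \<notin># M)"
    unfolding mex_def using residue_class_eq_progression by metis
  also have "\<dots> = t + ?g * A"
  proof (rule Least_equality)
    show "(\<exists>i. t + ?g * A = t + i * A) \<and> t + ?g * A \<notin># M"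
      using first_gap_notin[OF inj_v] by blast
  next
    fix k assume "(\<exists>i. k = t + i * A) \<and> k \<notin># M"
    then obtain i where "k = t + i * A" and "t + i * A \<notin># M"
      by blast
    moreover have "?g \<le> i"
      using \<open>t + i * A \<notin># M\<close> in_if_less_first_gap[OF inj_v] not_le by blast
    ultimately show "t + ?g * A \<le> k"
      by simp
  qed
  finally show ?thesis .
qed

lemma mex_mod_double_iff_even:
  "mex A t M mod (2 * A) = t mod (2 * A) \<longleftrightarrow> even (first_gap (\<lambda>i. t + i * A) M)"
proof -
  have "(t + j * A) mod (2 * A) = t mod (2 * A) \<longleftrightarrow> 2 * A dvd j * A" for j
    using mod_eq_dvd_iff_nat[of t "t + j * A" "2 * A"] by auto
  also have "2 * A dvd j * A \<longleftrightarrow> even j" for j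
    using t_pos t_le by simp
  finally show ?thesis
    by (simp add: mex_eq_first_gap)
qed

lemma card_fiber_eq_p_mex:
  assumes "finite S" and "0 \<notin> S"
  shows "card {M. (S, M) \<in> pairs n} = p_mex A t (int n - int (\<Sum>S))"
proof (cases "\<Sum>S \<le> n")
  case True
  then have "int n - int (\<Sum>S) = int (n - \<Sum>S)"
    by simp
  moreover have "{M. (S, M) \<in> pairs n} = {M \<in> partitions (n - \<Sum>S). mex A t M mod (2 * A) = t mod (2 * A)}"
    using True assms by (auto simp: pairs_def partitions_def mex_mod_double_iff_even)
  ultimately show ?thesis
    by (simp only: p_mex_of_nat)
next
  case False
  then have "{M. (S, M) \<in> pairs n} = {}" and "int n - int (\<Sum>S) < 0"
    by (auto simp: pairs_def simp del: of_nat_sum)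
  then show ?thesis
    by (simp only: p_mex_def if_True card.empty)
qed

lemma pentagonal_p_mex_sum_mod_2:
  "((\<Sum>s\<in>{0..n}. p_mex A t (int n - int s * (3 * int s - 1) div 2))
     + (\<Sum>s\<in>{1..n}. p_mex A t (int n - int s * (3 * int s + 1) div 2))) mod 2
    = (if \<exists>k. (\<Sum>i<k. t + i * A) = n then 1 else 0)"
proof -
  have "finite (pentagon_minus s)" "0 \<notin> pentagon_minus s"
    and "finite (pentagon_plus s)" "0 \<notin> pentagon_plus s" for s
    by (auto simp: pentagon_minus_def pentagon_plus_def)
  then have "p_mex A t (int n - int s * (3 * int s - 1) div 2) = card {M. (pentagon_minus s, M) \<in> pairs n}"
    and "p_mex A t (int n - int s * (3 * int s + 1) div 2) = card {M. (pentagon_plus s, M) \<in> pairs n}"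
    for s
    by (simp_all add: card_fiber_eq_p_mex int_sum_pentagon_minus int_sum_pentagon_plus del: of_nat_sum)
  then show ?thesis
    using pentagon_fibers_mod_2 by simp
qed

end

lemma double_sum_arith_progression:
  "2 * int (\<Sum>i<k. a + i * d) = 2 * int k * int a + int k * (int k - 1) * int d"
  by (induction k) (simp_all add: algebra_simps)

theorem lemma2p2:
  fixes t m n :: nat
  assumes "0 < t" and "0 < m" and "0 < n"
  shows "((\<Sum>s\<in>{0..n}. p_mex (m*t) t (int n - int s * (3 * int s - 1) div 2))
        + (\<Sum>s\<in>{1..n}. p_mex (m*t) t (int n - int s * (3 * int s + 1) div 2))) mod 2
       = (if \<exists>k::nat. 0 < k \<and> 2 * int n = (int m * int k^2 - (int m - 2) * int k) * int t
          then 1 else 0)"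
proof -
  interpret positive_residue_class "m * t" t
    using assms by unfold_locales auto
  have "2 * int (\<Sum>i<k. t + i * (m * t)) = (int m * int k^2 - (int m - 2) * int k) * int t" for k
    unfolding double_sum_arith_progression by (simp add: algebra_simps power2_eq_square)
  then have "(\<Sum>i<k. t + i * (m * t)) = n \<longleftrightarrow> 2 * int n = (int m * int k^2 - (int m - 2) * int k) * int t"
    for k
    by (smt (verit) of_nat_eq_iff)
  moreover have "(\<Sum>i<0. t + i * (m * t)) \<noteq> n"
    using assms(3) by simp
  ultimately have "(\<exists>k. (\<Sum>i<k. t + i * (m * t)) = n)
      \<longleftrightarrow> (\<exists>k::nat. 0 < k \<and> 2 * int n = (int m * int k^2 - (int m - 2) * int k) * int t)"
    by (metis gr0I)
  then show ?thesis
    using pentagonal_p_mex_sum_mod_2[of n] by simp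
qed

end
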